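(* Let $P$ be a finite poset, $\epsilon\in\{1,-1\}$ and $\xi\in S^{(\epsilon)}$ such that $T^\xi$ is a generator of $\omega^{(\epsilon)}$ of degree $d>q^{(\epsilon)}\mathrm{dist}(-\infty,\infty)$. Define $\xi_1\in\mathbb Z^{P^-}$ by $\xi_1(z)=\xi(z)-1$ if $z=-\infty$ or if there exists $C\in C_\xi^{[d-\epsilon]}$ with $z=\max\{c\in C:\xi(c)>\epsilon\}$, and $\xi_1(z)=\xi(z)$ otherwise. Then $\xi_1\in S^{(\epsilon)}$ and $T^{\xi_1}$ is a generator of $\omega^{(\epsilon)}$ of degree $d-1$.
   Context: $P^\pm=P\cup\{-\infty,\infty\}$, $-\infty<z<\infty$ for $z\in P$; $P^-=P\cup\{-\infty\}$. Saturated chain: $x=z_0\lessdot\cdots\lessdot z_t=y$, length $t$; $q^{(\epsilon)}\mathrm{dist}(x,y)=\max\{\epsilon t:$ saturated chain of length $t$ from $x$ to $y$ in $P^\pm\}$. $\xi^+(B)=\sum_{b\in B}\xi(b)$. $S^{(m)}=\{\xi\in\mathbb Z^{P^-}:\xi(x)\ge m\ \forall x\in P,\ \xi(-\infty)\ge\xi^+(C)+m$ for every maximal chain $C$\}; $C_\xi^{[m]}$ = maximal chains $C$ of $P$ with $\xi^+(C)=m$. $R=\mathbb K[\mathcal C(P)]=\bigoplus_{S^{(0)}}\mathbb KT^\xi$ (Ehrhart ring of the chain polytope; $T^\xi=\prod_{x\in P^-}T_x^{\xi(x)}$, $\deg T^\xi=\xi(-\infty)$), $\omega^{(1)}=\omega=\bigoplus_{S^{(1)}}\mathbb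 KT^\xi$ canonical ideal, $\omega^{(-1)}=R:\omega=\bigoplus_{S^{(-1)}}\mathbb KT^\xi$. A generator of $\omega^{(\epsilon)}$ is a monomial $T^\xi$, $\xi\in S^{(\epsilon)}$, not of the form $T^{\xi_1}T^{\xi_2}$ with $\xi_1\in S^{(0)}$, $\xi_1(-\infty)>0$, $\xi_2\in S^{(\epsilon)}$. *)

theory Defs
  imports Main
begin

text \<open>The poset P is a finite subset of a type of class order, with the induced order.
  P^{+-} is modelled by the datatype ext: NegInf, Fin x (x in P), PosInf.
  Elements of Z^{P^-} are functions ext => int; only values at NegInf and Fin x, x in P, matter.\<close>

datatype 'a ext = NegInf | Fin 'a | PosInf

fun ext_le :: "'a::order ext \<Rightarrow> 'a ext \<Rightarrow> bool" where
  "ext_le NegInf _ = True"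
| "ext_le _ PosInf = True"
| "ext_le (Fin x) (Fin y) = (x \<le> y)"
| "ext_le _ _ = False"

definition ext_less :: "'a::order ext \<Rightarrow> 'a ext \<Rightarrow> bool" where
  "ext_less x y \<longleftrightarrow> ext_le x y \<and> x \<noteq> y"

definition ext_carrier :: "'a set \<Rightarrow> 'a ext set" where
  "ext_carrier P = {NegInf, PosInf} \<union> Fin ` P"

definition minus_carrier :: "'a set \<Rightarrow> 'a ext set" where
  "minus_carrier P = insert NegInf (Fin ` P)"

definition covers :: "'a::order set \<Rightarrow> 'a ext \<Rightarrow> 'a ext \<Rightarrow> bool" where
  "covers P x y \<longleftrightarrow> x \<in> ext_carrier P \<and> y \<in> ext_carrier P \<and> ext_less x y \<and>
     \<not> (\<exists>z \<in> ext_carrier P. ext_less x z \<and> ext_less z y)"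

definition sat_chain :: "'a::order set \<Rightarrow> 'a ext \<Rightarrow> 'a ext \<Rightarrow> 'a ext list \<Rightarrow> bool" where
  "sat_chain P x y zs \<longleftrightarrow> zs \<noteq> [] \<and> hd zs = x \<and> last zs = y \<and>
     (\<forall>i. Suc i < length zs \<longrightarrow> covers P (zs ! i) (zs ! Suc i))"

definition qdist :: "int \<Rightarrow> 'a::order set \<Rightarrow> 'a ext \<Rightarrow> 'a ext \<Rightarrow> int" where
  "qdist eps P x y = Max {eps * int (length zs - 1) | zs. sat_chain P x y zs}"

definition is_chain :: "'a::order set \<Rightarrow> 'a set \<Rightarrow> bool" where
  "is_chain P C \<longleftrightarrow> C \<subseteq> P \<and> (\<forall>x\<in>C. \<forall>y\<in>C. x \<le> y \<or> y \<le> x)"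

definition max_chain :: "'a::order set \<Rightarrow> 'a set \<Rightarrow> bool" where
  "max_chain P C \<longleftrightarrow> is_chain P C \<and> (\<forall>D. is_chain P D \<and> C \<subseteq> D \<longrightarrow> D = C)"

definition xi_plus :: "('a ext \<Rightarrow> int) \<Rightarrow> 'a set \<Rightarrow> int" where
  "xi_plus \<xi> B = (\<Sum>b\<in>B. \<xi> (Fin b))"

definition S_set :: "int \<Rightarrow> 'a::order set \<Rightarrow> ('a ext \<Rightarrow> int) set" where
  "S_set m P = {\<xi>. (\<forall>x\<in>P. \<xi> (Fin x) \<ge> m) \<and>
                     (\<forall>C. max_chain P C \<longrightarrow> \<xi> NegInf \<ge> xi_plus \<xi> C + m)}"

definition C_xi :: "'a::order set \<Rightarrow> ('a ext \<Rightarrow> int) \<Rightarrow> int \<Rightarrow> 'a set set" where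
  "C_xi P \<xi> m = {C. max_chain P C \<and> xi_plus \<xi> C = m}"

text \<open>T^xi is a generator of omega^{(eps)}; T^xi = T^xi1 T^xi2 means xi = xi1 + xi2 on P^-.\<close>
definition is_generator :: "int \<Rightarrow> 'a::order set \<Rightarrow> ('a ext \<Rightarrow> int) \<Rightarrow> bool" where
  "is_generator eps P \<xi> \<longleftrightarrow> \<xi> \<in> S_set eps P \<and>
     \<not> (\<exists>\<xi>1 \<xi>2. \<xi>1 \<in> S_set 0 P \<and> \<xi>1 NegInf > 0 \<and> \<xi>2 \<in> S_set eps P \<and>
          (\<forall>z \<in> minus_carrier P. \<xi> z = \<xi>1 z + \<xi>2 z))"

end

theory Submission imports Defs begin

text \<open>\<xi>1 stays in S^(\<epsilon>): a maximal chain C with \<xi>^+(C) = d - \<epsilon> contains an element with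
  \<xi> > \<epsilon>, for otherwise d = \<epsilon>(|C| + 1) \<le> q^(\<epsilon>)dist(-\<infinity>, \<infinity>); so C, like -\<infinity>, loses at
  least one unit. If \<xi>1 = \<alpha> + \<beta> with \<alpha> \<in> S^(0), \<alpha>(-\<infinity>) > 0 and \<beta> \<in> S^(\<epsilon>), then
  \<xi> = \<alpha> + (\<xi> - \<alpha>) with \<xi> - \<alpha> \<in> S^(\<epsilon>), contradicting that T^\<xi> is a generator. The only
  nontrivial point is the chain condition for \<xi> - \<alpha> on a chain C containing a lowered
  element: let w be the lowest one and D \<in> C_\<xi>^[d-\<epsilon>] a chain whose topmost element with
  \<xi> > \<epsilon> is w. Exchanging the parts of C and D above w gives two maximal chains; w is the
  only lowered element of the first, so the chain condition for \<beta> on it, combined with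
  that for \<xi> on the second, yields the one for \<xi> - \<alpha> on C.\<close>

lemma ext_le_trans: "ext_le x y \<Longrightarrow> ext_le y z \<Longrightarrow> ext_le (x::'a::order ext) z"
  by (cases x; cases y; cases z) auto

lemma ext_le_antisym: "ext_le x y \<Longrightarrow> ext_le y x \<Longrightarrow> (x::'a::order ext) = y"
  by (cases x; cases y) auto

lemma ext_less_trans: "ext_less x y \<Longrightarrow> ext_less y z \<Longrightarrow> ext_less (x::'a::order ext) z"
  unfolding ext_less_def using ext_le_trans ext_le_antisym by blast

lemma transp_ext_less: "transp (ext_less :: 'a::order ext \<Rightarrow> _)"
  by (rule transpI) (rule ext_less_trans)

lemma sorted_wrt_ext_less_distinct: "sorted_wrt ext_less zs \<Longrightarrow> distinct zs"
  by (induction zs) (auto simp: ext_less_def)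

lemma sorted_wrt_ext_less_gap:
  assumes "sorted_wrt ext_less zs" "Suc i < length zs" "j < length zs"
    and "ext_less (zs ! i) z" "ext_less z (zs ! Suc i)"
  shows "ext_less (zs ! j) z \<or> ext_less z (zs ! j)"
proof (cases "j \<le> i")
  case True
  then have "j = i \<or> ext_less (zs ! j) (zs ! i)"
    using assms(1,2) sorted_wrt_nth_less[of ext_less zs j i] by linarith
  then show ?thesis using assms(4) ext_less_trans by blast
next
  case False
  then have "j = Suc i \<or> ext_less (zs ! Suc i) (zs ! j)"
    using assms(1,3) sorted_wrt_nth_less[of ext_less zs "Suc i" j] by linarith
  then show ?thesis using assms(5) ext_less_trans by blast
qed

lemma finite_chain_sorted_list:
  fixes C :: "'a::order set"
  assumes "finite C" "\<forall>x\<in>C. \<forall>y\<in>C. x \<le> y \<or> y \<le> x"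
  obtains xs where "set xs = C" "sorted_wrt (<) xs" "distinct xs"
  using assms
proof (induction "card C" arbitrary: C thesis)
  case 0
  then show ?case by auto
next
  case (Suc n)
  obtain m where m: "m \<in> C" "\<forall>b\<in>C. m \<le> b \<longrightarrow> m = b"
    using finite_has_maximal[OF Suc.prems(2)] Suc.hyps(2) by fastforce
  obtain xs where xs: "set xs = C - {m}" "sorted_wrt (<) xs" "distinct xs"
    by (rule Suc.hyps(1)[of "C - {m}"]) (use Suc.hyps(2) Suc.prems(2,3) m(1) in auto)
  have "\<forall>x\<in>set xs. x < m"
    using xs(1) m Suc.prems(3) by (metis Diff_iff insert_iff order.order_iff_strict)
  then show ?case
    using Suc.prems(1)[of "xs @ [m]"] xs m(1) by (auto simp: sorted_wrt_append)
qed

lemma max_chainD: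
  assumes "max_chain P C"
  shows "C \<subseteq> P" "\<forall>x\<in>C. \<forall>y\<in>C. x \<le> y \<or> y \<le> x"
  using assms by (auto simp: max_chain_def is_chain_def)

lemma max_chain_finite: "finite P \<Longrightarrow> max_chain P C \<Longrightarrow> finite C"
  using max_chainD(1) finite_subset by blast

lemma max_chain_comparable_mem:
  assumes "max_chain P C" "p \<in> P" "\<forall>c\<in>C. c \<le> p \<or> p \<le> c"
  shows "p \<in> C"
proof -
  have "is_chain P (insert p C)"
    using assms max_chainD[OF assms(1)] by (auto simp: is_chain_def)
  then show ?thesis using assms(1) unfolding max_chain_def by blast
qed

lemma splice_max_chain:
  fixes P :: "'a::order set"
  assumes C: "max_chain P C" and D: "max_chain P D" and "w \<in> C" "w \<in> D"
  shows "max_chain P ({x\<in>C. x \<le> w} \<union> {x\<in>D. \<not> x \<le> w})"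
proof -
  let ?F = "{x\<in>C. x \<le> w} \<union> {x\<in>D. \<not> x \<le> w}"
  note Cc = max_chainD[OF C] and Dc = max_chainD[OF D]
  have above: "w \<le> z" if "z \<in> D" "\<not> z \<le> w" for z
    using Dc(2) assms(4) that by blast
  have chF: "is_chain P ?F"
    using Cc Dc above by (auto simp: is_chain_def intro: order_trans)
  have "E \<subseteq> ?F" if E: "is_chain P E" "?F \<subseteq> E" for E
  proof
    fix y assume y: "y \<in> E"
    have cmp: "\<forall>x\<in>E. \<forall>z\<in>E. x \<le> z \<or> z \<le> x" "y \<in> P"
      using E(1) y by (auto simp: is_chain_def)
    have wE: "w \<in> E" using E(2) assms(3) by auto
    show "y \<in> ?F"
    proof (cases "y \<le> w")
      case True
      have "c \<le> y \<or> y \<le> c" if c: "c \<in> C" for c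
      proof (cases "c \<le> w")
        case False
        then show ?thesis using Cc(2) c assms(3) True by (blast intro: order_trans)
      qed (use c cmp y E(2) in blast)
      then show ?thesis using max_chain_comparable_mem[OF C cmp(2)] True by blast
    next
      case False
      then have "w \<le> y" using cmp wE y by blast
      then have "c \<le> y \<or> y \<le> c" if "c \<in> D" for c
        using that cmp y E(2) by (cases "c \<le> w") (auto intro: order_trans)
      then show ?thesis using max_chain_comparable_mem[OF D cmp(2)] False by blast
    qed
  qed
  then show ?thesis using chF unfolding max_chain_def by blast
qed

lemma finite_ext_carrier: "finite P \<Longrightarrow> finite (ext_carrier P)"
  by (simp add: ext_carrier_def)

lemma sat_chain_carrier:
  assumes "sat_chain P x y zs" "y \<in> ext_carrier P"
  shows "set zs \<subseteq> ext_carrier P"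
proof
  fix z assume "z \<in> set zs"
  then obtain i where i: "i < length zs" "zs ! i = z" by (auto simp: in_set_conv_nth)
  show "z \<in> ext_carrier P"
  proof (cases "Suc i < length zs")
    case True
    then show ?thesis using assms(1) i unfolding sat_chain_def covers_def by blast
  next
    case False
    then have "i = length zs - 1" using i(1) by simp
    then have "z = last zs" using i assms(1) unfolding sat_chain_def by (metis last_conv_nth)
    then show ?thesis using assms by (simp add: sat_chain_def)
  qed
qed

lemma sat_chain_sorted: "sat_chain P x y zs \<Longrightarrow> sorted_wrt ext_less zs"
  unfolding sat_chain_def covers_def
  by (subst sorted_wrt_iff_nth_Suc_transp[OF transp_ext_less]) blast

lemma sat_chain_length_le:
  assumes "finite P" "sat_chain P x y zs" "y \<in> ext_carrier P"
  shows "length zs \<le> card (ext_carrier P)"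
proof -
  have "distinct zs" using assms(2) sat_chain_sorted sorted_wrt_ext_less_distinct by blast
  then show ?thesis
    using sat_chain_carrier[OF assms(2,3)] assms(1)
    by (metis card_mono distinct_card finite_ext_carrier)
qed

lemma finite_qdist_set:
  assumes "finite P" "y \<in> ext_carrier P"
  shows "finite {eps * int (length zs - 1) | zs. sat_chain P x y zs}"
proof -
  have "{eps * int (length zs - 1) | zs. sat_chain P x y zs}
     \<subseteq> (\<lambda>n. eps * int n) ` {..card (ext_carrier P)}"
    using sat_chain_length_le[OF assms(1) _ assms(2)] by fastforce
  then show ?thesis by (rule finite_subset) auto
qed

text \<open>A maximal chain c1 < \<dots> < ck gives the saturated chain -\<infinity> \<lessdot> c1 \<lessdot> \<dots> \<lessdot> ck \<lessdot> \<infinity>: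
  an element strictly between two neighbours would be comparable with all of C, hence in C.\<close>

lemma max_chain_sat_chain:
  fixes P :: "'a::order set"
  assumes "finite P" "max_chain P C"
  obtains zs where "sat_chain P NegInf PosInf zs" "length zs = card C + 2"
proof -
  obtain xs where xs: "set xs = C" "sorted_wrt (<) xs" "distinct xs"
    using finite_chain_sorted_list max_chain_finite[OF assms] max_chainD(2)[OF assms(2)]
    by blast
  define zs where "zs = NegInf # map Fin xs @ [PosInf]"
  have srt: "sorted_wrt ext_less zs"
    using xs(2) by (auto simp: zs_def sorted_wrt_append sorted_wrt_map ext_less_def
        intro: sorted_wrt_mono_rel[of _ "(<)"])
  have car: "set zs \<subseteq> ext_carrier P"
    using xs(1) max_chainD(1)[OF assms(2)] by (auto simp: zs_def ext_carrier_def)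
  have "covers P (zs ! i) (zs ! Suc i)" if i: "Suc i < length zs" for i
    unfolding covers_def
  proof (intro conjI notI)
    show "ext_less (zs ! i) (zs ! Suc i)" using srt i sorted_wrt_nth_less by blast
    show "zs ! i \<in> ext_carrier P" "zs ! Suc i \<in> ext_carrier P" using car i by auto
    assume "\<exists>z\<in>ext_carrier P. ext_less (zs ! i) z \<and> ext_less z (zs ! Suc i)"
    then obtain z where z: "z \<in> ext_carrier P" "ext_less (zs ! i) z" "ext_less z (zs ! Suc i)"
      by blast
    have cmp: "ext_less (Fin c) z \<or> ext_less z (Fin c)" if "c \<in> C" for c
    proof -
      have "Fin c \<in> set zs" using that xs(1) by (simp add: zs_def)
      then obtain j where "j < length zs" "zs ! j = Fin c" by (metis in_set_conv_nth)
      then show ?thesis using sorted_wrt_ext_less_gap[OF srt i _ z(2,3)] by metis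
    qed
    have "z \<noteq> NegInf" "z \<noteq> PosInf"
      using z by (cases "zs ! i"; cases "zs ! Suc i"; auto simp: ext_less_def)+
    then obtain p where p: "z = Fin p" "p \<in> P" using z(1) by (auto simp: ext_carrier_def)
    then have "p \<in> C"
      using max_chain_comparable_mem[OF assms(2)] cmp by (fastforce simp: ext_less_def)
    then show False using cmp p by (auto simp: ext_less_def)
  qed
  then have "sat_chain P NegInf PosInf zs" by (simp add: sat_chain_def zs_def)
  then show ?thesis
    using that xs distinct_card[of xs] by (simp add: zs_def)
qed

lemma max_chain_le_qdist:
  fixes P :: "'a::order set"
  assumes "finite P" "max_chain P C"
  shows "eps * (int (card C) + 1) \<le> qdist eps P NegInf PosInf"
proof -
  obtain zs where zs: "sat_chain P NegInf PosInf zs" "length zs = card C + 2"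
    using max_chain_sat_chain[OF assms] by blast
  have "eps * int (length zs - 1) \<le> qdist eps P NegInf PosInf"
    unfolding qdist_def using zs(1) finite_qdist_set[OF assms(1), of PosInf eps NegInf]
    by (intro Max_ge) (auto simp: ext_carrier_def)
  then show ?thesis using zs(2) by (simp add: add.commute)
qed

lemma xi_plus_diff: "xi_plus (\<lambda>z. f z - g z) X = xi_plus f X - xi_plus g X"
  by (simp add: xi_plus_def sum_subtractf)

lemma xi_plus_mono: "(\<And>x. x \<in> X \<Longrightarrow> f (Fin x) \<le> g (Fin x)) \<Longrightarrow> xi_plus f X \<le> xi_plus g X"
  unfolding xi_plus_def by (rule sum_mono)

lemma xi_plus_union:
  "finite A \<Longrightarrow> finite B \<Longrightarrow> A \<inter> B = {} \<Longrightarrow> xi_plus f (A \<union> B) = xi_plus f A + xi_plus f B"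
  unfolding xi_plus_def by (rule sum.union_disjoint)

lemma xi_plus_split:
  assumes "finite X"
  shows "xi_plus f X = xi_plus f {x\<in>X. x \<le> w} + xi_plus f {x\<in>X. \<not> x \<le> w}"
proof -
  have "X = {x\<in>X. x \<le> w} \<union> {x\<in>X. \<not> x \<le> w}" by auto
  then show ?thesis using xi_plus_union[of "{x\<in>X. x \<le> w}" "{x\<in>X. \<not> x \<le> w}" f] assms by auto
qed

definition max_above :: "int \<Rightarrow> ('a::order ext \<Rightarrow> int) \<Rightarrow> 'a set \<Rightarrow> 'a \<Rightarrow> bool" where
  "max_above eps \<xi> C c \<longleftrightarrow> c \<in> C \<and> eps < \<xi> (Fin c) \<and> (\<forall>c'\<in>C. eps < \<xi> (Fin c') \<longrightarrow> c' \<le> c)"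

definition lowered :: "int \<Rightarrow> 'a::order set \<Rightarrow> ('a ext \<Rightarrow> int) \<Rightarrow> 'a \<Rightarrow> bool" where
  "lowered eps P \<xi> c \<longleftrightarrow> (\<exists>C \<in> C_xi P \<xi> (\<xi> NegInf - eps). max_above eps \<xi> C c)"

text \<open>\<open>lower eps P \<xi>\<close> is the \<xi>1 of the theorem.\<close>

definition lower :: "int \<Rightarrow> 'a::order set \<Rightarrow> ('a ext \<Rightarrow> int) \<Rightarrow> 'a ext \<Rightarrow> int" where
  "lower eps P \<xi> z =
     (if z = NegInf \<or> (\<exists>c. z = Fin c \<and> lowered eps P \<xi> c) then \<xi> z - 1 else \<xi> z)"

lemma lower_NegInf [simp]: "lower eps P \<xi> NegInf = \<xi> NegInf - 1"
  by (simp add: lower_def)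

lemma lower_Fin:
  "lower eps P \<xi> (Fin c) = (if lowered eps P \<xi> c then \<xi> (Fin c) - 1 else \<xi> (Fin c))"
  by (simp add: lower_def)

lemma lowered_gt: "lowered eps P \<xi> c \<Longrightarrow> eps < \<xi> (Fin c)"
  by (auto simp: lowered_def max_above_def)

lemma lower_Fin_le: "lower eps P \<xi> (Fin c) \<le> \<xi> (Fin c)"
  by (simp add: lower_Fin)

lemma xi_plus_lower_le: "xi_plus (lower eps P \<xi>) X \<le> xi_plus \<xi> X"
  by (rule xi_plus_mono) (rule lower_Fin_le)

lemma max_above_exists:
  fixes C :: "'a::order set"
  assumes "finite C" "\<forall>x\<in>C. \<forall>y\<in>C. x \<le> y \<or> y \<le> x" "c \<in> C" "eps < \<xi> (Fin c)"
  obtains m where "max_above eps \<xi> C m"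
proof -
  obtain m where "m \<in> {c\<in>C. eps < \<xi> (Fin c)}"
      "\<forall>b\<in>{c\<in>C. eps < \<xi> (Fin c)}. m \<le> b \<longrightarrow> m = b"
    using finite_has_maximal[of "{c\<in>C. eps < \<xi> (Fin c)}"] assms by auto
  then show ?thesis using that assms(2) unfolding max_above_def by blast
qed

lemma xi_plus_lower_le_pred:
  assumes "finite C" "m \<in> C" "lowered eps P \<xi> m"
  shows "xi_plus (lower eps P \<xi>) C \<le> xi_plus \<xi> C - 1"
proof -
  have "xi_plus (lower eps P \<xi>) C = lower eps P \<xi> (Fin m) + xi_plus (lower eps P \<xi>) (C - {m})"
    unfolding xi_plus_def using assms by (intro sum.remove)
  also have "\<dots> \<le> \<xi> (Fin m) - 1 + xi_plus \<xi> (C - {m})"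
    using assms(3) xi_plus_lower_le[of eps P \<xi> "C - {m}"] by (simp add: lower_Fin)
  also have "\<dots> = xi_plus \<xi> C - 1"
    unfolding xi_plus_def using assms(1,2) sum.remove[of C m "\<lambda>b. \<xi> (Fin b)"] by simp
  finally show ?thesis .
qed

lemma xi_plus_lower_eq_pred:
  assumes "finite F" "w \<in> F" "\<forall>x\<in>F. lowered eps P \<xi> x \<longleftrightarrow> x = w"
  shows "xi_plus (lower eps P \<xi>) F = xi_plus \<xi> F - 1"
proof -
  have "xi_plus (lower eps P \<xi>) F = (\<Sum>x\<in>F. \<xi> (Fin x) - (if x = w then 1 else 0))"
    unfolding xi_plus_def using assms(3) by (intro sum.cong) (auto simp: lower_Fin)
  then show ?thesis using assms(1,2) by (simp add: xi_plus_def sum_subtractf)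
qed

lemma S_set_lower:
  fixes P :: "'a::order set"
  assumes "finite P" "\<xi> \<in> S_set eps P" "qdist eps P NegInf PosInf < \<xi> NegInf"
  shows "lower eps P \<xi> \<in> S_set eps P"
proof -
  have pos: "\<And>x. x \<in> P \<Longrightarrow> eps \<le> \<xi> (Fin x)"
    and chain: "\<And>C. max_chain P C \<Longrightarrow> xi_plus \<xi> C + eps \<le> \<xi> NegInf"
    using assms(2) by (auto simp: S_set_def)
  have "xi_plus (lower eps P \<xi>) C + eps \<le> \<xi> NegInf - 1" if C: "max_chain P C" for C
  proof (cases "xi_plus \<xi> C = \<xi> NegInf - eps")
    case tight: True
    have "\<exists>c\<in>C. eps < \<xi> (Fin c)"
    proof (rule ccontr)
      assume "\<not> ?thesis"
      then have "\<forall>c\<in>C. \<xi> (Fin c) = eps" using pos max_chainD(1)[OF C] by force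
      then have "xi_plus \<xi> C = eps * int (card C)" by (simp add: xi_plus_def)
      then show False
        using tight max_chain_le_qdist[OF assms(1) C, of eps] assms(3) by (simp add: algebra_simps)
    qed
    then obtain m where m: "max_above eps \<xi> C m"
      using max_above_exists max_chain_finite[OF assms(1) C] max_chainD(2)[OF C] by metis
    then have "lowered eps P \<xi> m" "m \<in> C"
      using C tight by (auto simp: lowered_def C_xi_def max_above_def)
    then show ?thesis
      using xi_plus_lower_le_pred[OF max_chain_finite[OF assms(1) C]] tight by fastforce
  next
    case False
    then show ?thesis using chain[OF C] xi_plus_lower_le[of eps P \<xi> C] by linarith
  qed
  moreover have "eps \<le> lower eps P \<xi> (Fin x)" if "x \<in> P" for x
    using pos[OF that] lowered_gt[of eps P \<xi> x] by (simp add: lower_Fin)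
  ultimately show ?thesis by (simp add: S_set_def)
qed

text \<open>A is the part of C below w, B the part above w of a chain D \<in> C_\<xi>^[d-\<epsilon>] witnessing
  that w is lowered; the weight comparison is the chain condition for \<xi> on the other
  exchanged chain.\<close>

lemma lowered_exchange_chain:
  fixes P :: "'a::order set"
  assumes "finite P" "\<xi> \<in> S_set eps P" and C: "max_chain P C"
    and w: "w \<in> C" "lowered eps P \<xi> w" "\<forall>c\<in>C. lowered eps P \<xi> c \<longrightarrow> w \<le> c"
  obtains A B where "max_chain P (A \<union> B)" "A \<subseteq> C" "A \<inter> B = {}"
    "\<forall>x\<in>B. \<xi> (Fin x) \<le> eps" "xi_plus \<xi> (C - A) \<le> xi_plus \<xi> B"
    "xi_plus (lower eps P \<xi>) (A \<union> B) = xi_plus \<xi> (A \<union> B) - 1"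
proof -
  obtain D where D: "max_chain P D" "xi_plus \<xi> D = \<xi> NegInf - eps" "max_above eps \<xi> D w"
    using w(2) by (auto simp: lowered_def C_xi_def)
  define C1 C2 D1 D2 where parts: "C1 = {x\<in>C. x \<le> w}" "C2 = {x\<in>C. \<not> x \<le> w}"
    "D1 = {x\<in>D. x \<le> w}" "D2 = {x\<in>D. \<not> x \<le> w}"
  have F: "max_chain P (C1 \<union> D2)" and G: "max_chain P (D1 \<union> C2)"
    unfolding parts using splice_max_chain w(1) D(1,3) C by (auto simp: max_above_def)
  have fin: "finite C" "finite D" "finite C1" "finite C2" "finite D1" "finite D2"
    using max_chain_finite[OF assms(1)] C D(1) by (auto simp: parts)
  have D2_small: "\<forall>x\<in>D2. \<xi> (Fin x) \<le> eps"
    using D(3) by (force simp: parts max_above_def)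
  have "\<forall>x\<in>C1 \<union> D2. lowered eps P \<xi> x \<longleftrightarrow> x = w"
    using w D2_small lowered_gt by (force simp: parts)
  then have "xi_plus (lower eps P \<xi>) (C1 \<union> D2) = xi_plus \<xi> (C1 \<union> D2) - 1"
    using fin w(1) by (intro xi_plus_lower_eq_pred) (auto simp: parts)
  moreover have "xi_plus \<xi> C2 \<le> xi_plus \<xi> D2"
  proof -
    have "xi_plus \<xi> (D1 \<union> C2) + eps \<le> \<xi> NegInf" using assms(2) G by (simp add: S_set_def)
    moreover have "xi_plus \<xi> (D1 \<union> C2) = xi_plus \<xi> D1 + xi_plus \<xi> C2"
      using fin by (intro xi_plus_union) (auto simp: parts)
    ultimately show ?thesis using D(2) xi_plus_split[OF fin(2), of \<xi> w] by (simp add: parts)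
  qed
  moreover have "C - C1 = C2" "C1 \<subseteq> C" "C1 \<inter> D2 = {}" by (auto simp: parts)
  ultimately show ?thesis using that F D2_small by metis
qed

lemma lower_decomposition_chain_bound:
  fixes P :: "'a::order set"
  assumes "finite P" "\<xi> \<in> S_set eps P" "\<alpha> \<in> S_set 0 P" "\<beta> \<in> S_set eps P"
    and split: "\<forall>z\<in>minus_carrier P. lower eps P \<xi> z = \<alpha> z + \<beta> z"
    and C: "max_chain P C"
  shows "xi_plus \<xi> C - xi_plus \<alpha> C + eps \<le> \<xi> NegInf - \<alpha> NegInf"
proof -
  have \<beta>sum: "xi_plus \<beta> X = xi_plus (lower eps P \<xi>) X - xi_plus \<alpha> X" if "X \<subseteq> P" for X
    using split that unfolding xi_plus_def
    by (auto simp: minus_carrier_def sum_subtractf[symmetric] intro!: sum.cong)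
  have \<beta>chain: "xi_plus \<beta> F + eps \<le> \<xi> NegInf - 1 - \<alpha> NegInf" if "max_chain P F" for F
    using assms(4) that split by (auto simp: S_set_def minus_carrier_def)
  show ?thesis
  proof (cases "\<exists>c\<in>C. lowered eps P \<xi> c")
    case False
    then have "xi_plus (lower eps P \<xi>) C = xi_plus \<xi> C"
      unfolding xi_plus_def by (intro sum.cong) (auto simp: lower_Fin)
    then show ?thesis using \<beta>chain[OF C] \<beta>sum[OF max_chainD(1)[OF C]] by linarith
  next
    case True
    obtain w where "w \<in> {c\<in>C. lowered eps P \<xi> c}"
        "\<forall>c\<in>{c\<in>C. lowered eps P \<xi> c}. c \<le> w \<longrightarrow> w = c"
      using finite_has_minimal[of "{c\<in>C. lowered eps P \<xi> c}"] True
        max_chain_finite[OF assms(1) C] by auto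
    then have "w \<in> C" "lowered eps P \<xi> w" "\<forall>c\<in>C. lowered eps P \<xi> c \<longrightarrow> w \<le> c"
      using max_chainD(2)[OF C] by blast+
    then obtain A B where F: "max_chain P (A \<union> B)" and AB: "A \<subseteq> C" "A \<inter> B = {}"
      and B_small: "\<forall>x\<in>B. \<xi> (Fin x) \<le> eps" and "xi_plus \<xi> (C - A) \<le> xi_plus \<xi> B"
      and "xi_plus (lower eps P \<xi>) (A \<union> B) = xi_plus \<xi> (A \<union> B) - 1"
      using lowered_exchange_chain[OF assms(1,2) C] by metis
    moreover have "xi_plus \<alpha> B \<le> 0"
      unfolding xi_plus_def
    proof (rule sum_nonpos)
      fix x assume "x \<in> B"
      then show "\<alpha> (Fin x) \<le> 0"
        using B_small split assms(4) lower_Fin_le[of eps P \<xi> x] max_chainD(1)[OF F]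
        by (force simp: S_set_def minus_carrier_def)
    qed
    moreover have "0 \<le> xi_plus \<alpha> (C - A)"
      unfolding xi_plus_def using assms(3) max_chainD(1)[OF C]
      by (intro sum_nonneg) (auto simp: S_set_def)
    moreover have "finite C" "finite (A \<union> B)" using max_chain_finite[OF assms(1)] C F by auto
    then have "xi_plus f (A \<union> B) = xi_plus f A + xi_plus f B"
      "xi_plus f C = xi_plus f (C - A) + xi_plus f A" for f
      using AB unfolding xi_plus_def by (auto intro: sum.union_disjoint sum.subset_diff)
    ultimately show ?thesis
      using \<beta>chain[OF F] \<beta>sum[OF max_chainD(1)[OF F]] by fastforce
  qed
qed

lemma lower_decomposition_lifts:
  fixes P :: "'a::order set"
  assumes "finite P" "\<xi> \<in> S_set eps P" "\<alpha> \<in> S_set 0 P" "\<beta> \<in> S_set eps P"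
    and split: "\<forall>z\<in>minus_carrier P. lower eps P \<xi> z = \<alpha> z + \<beta> z"
  shows "(\<lambda>z. \<xi> z - \<alpha> z) \<in> S_set eps P"
proof -
  have "eps \<le> \<xi> (Fin x) - \<alpha> (Fin x)" if "x \<in> P" for x
    using that split assms(4) lower_Fin_le[of eps P \<xi> x] by (auto simp: S_set_def minus_carrier_def)
  then show ?thesis
    using lower_decomposition_chain_bound[OF assms] by (simp add: S_set_def xi_plus_diff)
qed

lemma is_generator_lower:
  fixes P :: "'a::order set"
  assumes "finite P" "is_generator eps P \<xi>" "qdist eps P NegInf PosInf < \<xi> NegInf"
  shows "is_generator eps P (lower eps P \<xi>)"
proof -
  have \<xi>: "\<xi> \<in> S_set eps P" using assms(2) by (simp add: is_generator_def)
  have "\<not> (\<alpha> \<in> S_set 0 P \<and> 0 < \<alpha> NegInf \<and> \<beta> \<in> S_set eps P \<and>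
           (\<forall>z\<in>minus_carrier P. lower eps P \<xi> z = \<alpha> z + \<beta> z))" for \<alpha> \<beta>
    using lower_decomposition_lifts[OF assms(1) \<xi>, of \<alpha> \<beta>] assms(2)
    unfolding is_generator_def by force
  then show ?thesis
    using S_set_lower[OF assms(1) \<xi> assms(3)] by (auto simp: is_generator_def)
qed

theorem mainTheorem15:
  fixes P :: "'a::order set" and eps :: int and \<xi> :: "'a ext \<Rightarrow> int" and d :: int
  assumes "finite P"
    and "eps = 1 \<or> eps = -1"
    and "is_generator eps P \<xi>"
    and "\<xi> NegInf = d"
    and "d > qdist eps P NegInf PosInf"
  defines "\<xi>1 \<equiv> (\<lambda>z. if z = NegInf \<or>
              (\<exists>C \<in> C_xi P \<xi> (d - eps). \<exists>c \<in> C. z = Fin c \<and> \<xi> (Fin c) > eps \<and>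
                  (\<forall>c' \<in> C. \<xi> (Fin c') > eps \<longrightarrow> c' \<le> c))
            then \<xi> z - 1 else \<xi> z)"
  shows "\<xi>1 \<in> S_set eps P \<and> is_generator eps P \<xi>1 \<and> \<xi>1 NegInf = d - 1"
proof -
  have "(\<exists>C \<in> C_xi P \<xi> (d - eps). \<exists>c \<in> C. z = Fin c \<and> \<xi> (Fin c) > eps \<and>
           (\<forall>c' \<in> C. \<xi> (Fin c') > eps \<longrightarrow> c' \<le> c)) \<longleftrightarrow> (\<exists>c. z = Fin c \<and> lowered eps P \<xi> c)" for z
    unfolding lowered_def max_above_def assms(4) by blast
  then have "\<xi>1 = lower eps P \<xi>"
    unfolding \<xi>1_def lower_def by simp
  then show ?thesis
    using is_generator_lower[OF assms(1,3)] assms(4,5) by (simp add: is_generator_def)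
qed

end
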